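(* Let $\theta$ be a real treatment effect, $\delta$ a clinical margin, $c\in(0,1)$, $\pi_{\mathrm{a}}$ an analysis prior and $\pi_{\mathrm{d}}$ a design prior with $\gamma_1=\Pr_{\mathrm{d}}(\theta>\delta)$, $\gamma_0=1-\gamma_1$. With $\mathcal{S}=\mathbb{I}\{\Pr_{\mathrm{a}}(\theta>\delta\mid\mathcal{D})>c\}$ and probabilities under the joint model $\theta\sim\pi_{\mathrm{d}}$, $\mathcal{D}\mid\theta\sim f(\cdot\mid\theta)$, let $\beta_C(c)=\Pr(\mathcal{S}=1\mid\theta>\delta)$, $\alpha_B(c)=\Pr(\mathcal{S}=1\mid\theta\le\delta)$, $\mathrm{PID}(c)=\Pr(\theta\le\delta\mid\mathcal{S}=1)=\frac{\gamma_0\alpha_B(c)}{\gamma_0\alpha_B(c)+\gamma_1\beta_C(c)}$, and let $\alpha(c)=\Pr(\mathcal{S}=1\mid\theta=\delta)$ be the frequentist Type I error rate. Under large-sample settings (in which $\alpha(c)$ is identified with its large-sample limit $1-c$), for any $c\in(0,1)$, $$-(1-c)\le\mathrm{PID}(c)-\alpha(c)\le c,$$ and, at the limits of the prior probability of effectiveness, $$\lim_{\gamma_1\to1}\bigl[\mathrm{PID}(c)-\alpha(c)\bigr]=-(1-c),\qquad\lim_{\gamma_1\to0}\bigl[\mathrm{PID}(c)-\alpha(c)\bigr]=c.$$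
   Context: $\Pr_{\mathrm{a}}(\cdot\mid\mathcal{D})$ is the posterior under the analysis prior. In large samples (under regularity conditions for the Bernstein–von Mises theorem) the frequentist Type I error of this rule converges to $1-c$. In the limits, $\alpha_B(c)$ and $\beta_C(c)$ are regarded as positive quantities held fixed while $\gamma_1$ varies. *)

theory Defs
  imports "HOL-Analysis.Analysis"
begin

text \<open>Probability of ineffective drug given success, expressed via Bayes' rule
  in terms of gamma1 = Pr_d(theta > delta), gamma0 = 1 - gamma1,
  alphaB = Pr(S=1 | theta <= delta), betaC = Pr(S=1 | theta > delta).\<close>
definition PID :: "real \<Rightarrow> real \<Rightarrow> real \<Rightarrow> real" where
  "PID gamma1 alphaB betaC =
     ((1 - gamma1) * alphaB) / ((1 - gamma1) * alphaB + gamma1 * betaC)"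

definition alpha_ls :: "real \<Rightarrow> real" where
  "alpha_ls c = 1 - c"

end

theory Submission
  imports Defs
begin

text \<open>Under large-sample asymptotics \<open>\<alpha>(c) = 1 - c\<close>, so the bounds only use that \<open>PID\<close>,
  being a conditional probability, lies in \<open>[0, 1]\<close>; the limits are the values \<open>PID 1 = 0\<close> and
  \<open>PID 0 = 1\<close>, reached continuously because the Bayes denominator does not vanish there.\<close>

lemma PID_nonneg:
  assumes "0 \<le> gamma1" "gamma1 \<le> 1" "0 \<le> alphaB" "0 \<le> betaC"
  shows "0 \<le> PID gamma1 alphaB betaC"
  using assms unfolding PID_def by (simp add: divide_nonneg_nonneg)

lemma PID_le_one:
  assumes "0 \<le> gamma1" "gamma1 \<le> 1" "0 \<le> alphaB" "0 \<le> betaC"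
  shows "PID gamma1 alphaB betaC \<le> 1"
proof -
  have "0 \<le> (1 - gamma1) * alphaB" "0 \<le> gamma1 * betaC"
    using assms by simp_all
  then show ?thesis
    unfolding PID_def by (auto simp: divide_le_eq_1)
qed

lemma PID_0:
  assumes "alphaB \<noteq> 0"
  shows "PID 0 alphaB betaC = 1"
  using assms unfolding PID_def by simp

lemma PID_1: "PID 1 alphaB betaC = 0"
  unfolding PID_def by simp

lemma isCont_PID:
  assumes "(1 - gamma1) * alphaB + gamma1 * betaC \<noteq> 0"
  shows "isCont (\<lambda>g. PID g alphaB betaC) gamma1"
  using assms unfolding PID_def by (intro continuous_intros) auto

lemma PID_tendsto_at_left_1:
  assumes "betaC \<noteq> 0"
  shows "((\<lambda>g. PID g alphaB betaC) \<longlongrightarrow> 0) (at_left 1)"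
proof -
  have "((\<lambda>g. PID g alphaB betaC) \<longlongrightarrow> PID 1 alphaB betaC) (at 1)"
    using isCont_PID[of 1 alphaB betaC] assms by (simp add: isCont_def)
  then show ?thesis
    by (simp add: PID_1 filterlim_at_split)
qed

lemma PID_tendsto_at_right_0:
  assumes "alphaB \<noteq> 0"
  shows "((\<lambda>g. PID g alphaB betaC) \<longlongrightarrow> 1) (at_right 0)"
proof -
  have "((\<lambda>g. PID g alphaB betaC) \<longlongrightarrow> PID 0 alphaB betaC) (at 0)"
    using isCont_PID[of 0 alphaB betaC] assms by (simp add: isCont_def)
  then show ?thesis
    by (simp add: PID_0 assms filterlim_at_split)
qed

theorem proposition4:
  fixes c alphaB betaC :: real
  assumes c: "0 < c" "c < 1"
    and aB: "0 < alphaB" "alphaB \<le> 1"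
    and bC: "0 < betaC" "betaC \<le> 1"
  shows "(\<forall>gamma1\<in>{0..1}.
           -(1 - c) \<le> PID gamma1 alphaB betaC - alpha_ls c \<and>
           PID gamma1 alphaB betaC - alpha_ls c \<le> c) \<and>
         ((\<lambda>gamma1. PID gamma1 alphaB betaC - alpha_ls c) \<longlongrightarrow> -(1 - c)) (at_left 1) \<and>
         ((\<lambda>gamma1. PID gamma1 alphaB betaC - alpha_ls c) \<longlongrightarrow> c) (at_right 0)"
proof (intro conjI ballI)
  fix gamma1 :: real
  assume "gamma1 \<in> {0..1}"
  with aB bC have "0 \<le> PID gamma1 alphaB betaC" "PID gamma1 alphaB betaC \<le> 1"
    by (simp_all add: PID_nonneg PID_le_one)
  then show "-(1 - c) \<le> PID gamma1 alphaB betaC - alpha_ls c"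
    and "PID gamma1 alphaB betaC - alpha_ls c \<le> c"
    unfolding alpha_ls_def by simp_all
next
  show "((\<lambda>g. PID g alphaB betaC - alpha_ls c) \<longlongrightarrow> -(1 - c)) (at_left 1)"
    using tendsto_diff[OF PID_tendsto_at_left_1 tendsto_const, of betaC alphaB "alpha_ls c"] bC
    by (simp add: alpha_ls_def)
next
  show "((\<lambda>g. PID g alphaB betaC - alpha_ls c) \<longlongrightarrow> c) (at_right 0)"
    using tendsto_diff[OF PID_tendsto_at_right_0 tendsto_const, of alphaB betaC "alpha_ls c"] aB
    by (simp add: alpha_ls_def)
qed

end
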